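(* Let $n,k$ be positive integers with $n\ge 3k$, put $C=n/k$, and let $\mathcal F\subset\binom{[n]}{k}$ be an intersecting family with $|\mathcal D(\mathcal F)|>\sum_{0\le \ell<k}\binom{n-1}{\ell}$. Then $$|\mathcal D^{(k-1)}(\mathcal F)|>\Big(1-\frac{2}{(C-1)^2}\Big)\binom{n-1}{k-1}\quad\text{and}\quad |\mathcal D^{(k-1)}(\mathcal F)|\ge\Big(1-\frac 2C\Big)\binom{n}{k-1}.$$
   Context: $[n]=\{1,\dots,n\}$; $\binom{[n]}{k}$ is the family of all $k$-element subsets of $[n]$. A family $\mathcal F$ is intersecting if $F\cap F'\neq\varnothing$ for all $F,F'\in\mathcal F$. $\mathcal D(\mathcal F):=\{F\setminus F' : F,F'\in\mathcal F\}$ and $\mathcal D^{(\ell)}(\mathcal F):=\{D\in\mathcal D(\mathcal F): |D|=\ell\}$. *)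

theory Defs
  imports Main "HOL-Library.Multiset" Complex_Main
begin

definition intersecting :: "'a set set \<Rightarrow> bool" where
  "intersecting F \<longleftrightarrow> (\<forall>A\<in>F. \<forall>B\<in>F. A \<inter> B \<noteq> {})"

definition diff_family :: "'a set set \<Rightarrow> 'a set set" where
  "diff_family F = {A - B | A B. A \<in> F \<and> B \<in> F}"

definition diff_family_level :: "nat \<Rightarrow> 'a set set \<Rightarrow> 'a set set" where
  "diff_family_level l F = {D \<in> diff_family F. card D = l}"

end

theory Submission
  imports Defs
begin

text \<open>In an intersecting family every difference \<open>A - B\<close> misses a point of \<open>A\<close>, so it has at
  most \<open>k - 1\<close> elements. All differences not of size \<open>k - 1\<close> are therefore among the
  \<open>\<Sum>l<k-1. C(n,l)\<close> small subsets of \<open>[n]\<close>, and by Pascal's rule the hypothesis leaves more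
  than \<open>C(n-1,k-1) - (\<Sum>l<k-2. C(n-1,l))\<close> differences of size \<open>k - 1\<close>. For \<open>n \<ge> 3k\<close> the
  coefficients \<open>C(n-1,l)\<close>, \<open>l < k\<close>, grow at least by the factor \<open>1/r\<close>, where
  \<open>r = k/(n-k) = 1/(C-1) \<le> 1/2\<close>, so the subtracted sum is at most \<open>2r\<^sup>2 C(n-1,k-1)\<close>: this is
  the first bound. The second follows from it by \<open>(n-k+1) C(n,k-1) = n C(n-1,k-1)\<close> and elementary
  algebra.\<close>

lemma binomial_growth:
  fixes m t k :: nat
  assumes "Suc t \<le> k"
  shows "(m choose t) * (Suc m - k) \<le> k * (m choose Suc t)"
proof -
  have "(m choose t) * (Suc m - k) \<le> (m choose t) * (m - t)"
    using assms by (intro mult_le_mono2) linarith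
  also have "\<dots> = Suc t * (m choose Suc t)"
    using binomial_absorption[of t m] binomial_absorb_comp[of m t] by (simp add: mult.commute)
  also have "\<dots> \<le> k * (m choose Suc t)"
    using assms by (intro mult_le_mono1)
  finally show ?thesis .
qed

lemma sum_lessThan_le_geometric:
  fixes a :: "nat \<Rightarrow> real"
  assumes growth: "\<And>i. i < t \<Longrightarrow> a i \<le> r * a (Suc i)"
    and nonneg: "\<And>i. 0 \<le> a i" and "0 \<le> r" and "r \<le> 1/2"
  shows "(\<Sum>l<t. a l) \<le> 2 * r * a t"
  using growth
proof (induction t)
  case 0
  then show ?case using nonneg \<open>0 \<le> r\<close> by simp
next
  case (Suc t)
  have "(\<Sum>l<Suc t. a l) \<le> (1 + 2 * r) * a t"
    using Suc by (simp add: algebra_simps)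
  also have "\<dots> \<le> (1 + 2 * r) * (r * a (Suc t))"
    using Suc.prems \<open>0 \<le> r\<close> by (intro mult_left_mono) auto
  also have "\<dots> \<le> 2 * r * a (Suc t)"
  proof -
    have "(1 + 2 * r) * r \<le> 2 * r"
      using mult_left_mono[OF \<open>r \<le> 1/2\<close> \<open>0 \<le> r\<close>] by (simp add: algebra_simps)
    then have "(1 + 2 * r) * r * a (Suc t) \<le> 2 * r * a (Suc t)"
      by (rule mult_right_mono[OF _ nonneg])
    then show ?thesis by (metis mult.assoc)
  qed
  finally show ?case .
qed

lemma sum_binomial_below_le:
  fixes n k j :: nat
  assumes "j < k" and "3 * k \<le> n"
  shows "real (\<Sum>l<j - 1. (n - 1) choose l)
           \<le> 2 * (real k / real (n - k))^2 * real ((n - 1) choose j)"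
proof -
  define r where "r = real k / real (n - k)"
  define a where "a l = real ((n - 1) choose l)" for l
  have "real (n - k) > 0" "real (n - k) \<ge> 2 * real k"
    using assms by (simp_all add: of_nat_diff)
  then have "0 \<le> r" "r \<le> 1/2"
    unfolding r_def by (simp_all add: field_simps)
  have growth: "a i \<le> r * a (Suc i)" if "i < k" for i
  proof -
    have "real ((n - 1 choose i) * (Suc (n - 1) - k)) \<le> real (k * (n - 1 choose Suc i))"
      using binomial_growth[of i k "n - 1"] that by (simp only: of_nat_le_iff)
    then show ?thesis
      using assms \<open>real (n - k) > 0\<close> unfolding a_def r_def by (simp add: field_simps)
  qed
  show ?thesis
  proof (cases j)
    case 0
    then show ?thesis by simp
  next
    case (Suc i)
    have "(\<Sum>l<i. a l) \<le> 2 * r * a i"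
      using growth assms Suc \<open>0 \<le> r\<close> \<open>r \<le> 1/2\<close>
      by (intro sum_lessThan_le_geometric) (auto simp: a_def)
    also have "\<dots> \<le> 2 * r * (r * a j)"
      using growth[of i] assms Suc \<open>0 \<le> r\<close> by (intro mult_left_mono) auto
    finally show ?thesis
      using Suc unfolding a_def r_def by (simp add: power2_eq_square)
  qed
qed

lemma sum_choose_Suc_lessThan:
  "(\<Sum>l<j. Suc m choose l) = (\<Sum>l<j. m choose l) + (\<Sum>l<j - 1. m choose l)"
proof (induction j)
  case 0
  then show ?case by simp
next
  case (Suc j)
  then show ?case by (cases j) simp_all
qed

lemma card_le_card_level_plus_binomials:
  assumes "finite X" and bounded: "\<And>D. D \<in> G \<Longrightarrow> D \<subseteq> X \<and> card D \<le> j"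
  shows "card G \<le> card {D \<in> G. card D = j} + (\<Sum>l<j. card X choose l)"
proof -
  define Low where "Low = (\<Union>l<j. {D. D \<subseteq> X \<and> card D = l})"
  have "G \<subseteq> {D \<in> G. card D = j} \<union> Low"
  proof
    fix D assume "D \<in> G"
    then have "D \<subseteq> X" "card D \<le> j" using bounded by auto
    show "D \<in> {D \<in> G. card D = j} \<union> Low"
    proof (cases "card D = j")
      case False
      with \<open>card D \<le> j\<close> have "card D \<in> {..<j}" by simp
      with \<open>D \<subseteq> X\<close> show ?thesis unfolding Low_def by blast
    qed (use \<open>D \<in> G\<close> in blast)
  qed
  moreover have "finite {D \<in> G. card D = j}"
    using bounded \<open>finite X\<close> by (auto intro: finite_subset[of _ "Pow X"])
  moreover have "finite Low"
    using \<open>finite X\<close> unfolding Low_def by (auto intro: finite_subset[of _ "Pow X"])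
  ultimately have "card G \<le> card ({D \<in> G. card D = j} \<union> Low)"
    by (intro card_mono) auto
  also have "\<dots> \<le> card {D \<in> G. card D = j} + card Low"
    by (rule card_Un_le)
  finally have "card G \<le> card {D \<in> G. card D = j} + card Low" .
  moreover have "card Low \<le> (\<Sum>l<j. card {D. D \<subseteq> X \<and> card D = l})"
    unfolding Low_def by (rule card_UN_le) simp
  moreover have "(\<Sum>l<j. card {D. D \<subseteq> X \<and> card D = l}) = (\<Sum>l<j. card X choose l)"
    using n_subsets[OF \<open>finite X\<close>] by simp
  ultimately show ?thesis by linarith
qed

lemma diff_family_of_intersecting:
  assumes "F \<subseteq> {A. A \<subseteq> X \<and> card A = k}" and "finite X" and "intersecting F"
    and "D \<in> diff_family F"
  shows "D \<subseteq> X \<and> card D \<le> k - 1"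
proof -
  obtain A B where D: "D = A - B" and "A \<in> F" "B \<in> F"
    using \<open>D \<in> diff_family F\<close> unfolding diff_family_def by blast
  then have "A \<subseteq> X" "card A = k" "A \<inter> B \<noteq> {}"
    using assms(1,3) unfolding intersecting_def by blast+
  then have "finite A" "card (A \<inter> B) \<ge> 1"
    using \<open>finite X\<close> finite_subset by (auto simp: Suc_le_eq card_gt_0_iff)
  moreover have "card (A - B) = card A - card (A \<inter> B)"
    using \<open>finite A\<close> by (intro card_Diff_subset_Int) simp
  ultimately show ?thesis
    using D \<open>A \<subseteq> X\<close> \<open>card A = k\<close> by auto
qed

lemma binomial_bound_comparison:
  fixes n k :: nat
  assumes "1 \<le> k" and "3 * k \<le> n"
  shows "(1 - 2 / (real n / real k)) * real (n choose (k - 1))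
           \<le> (1 - 2 / (real n / real k - 1)^2) * real ((n - 1) choose (k - 1))"
proof -
  define q where "q = real (n - k)"
  define B where "B = real ((n - 1) choose (k - 1))"
  have q: "q \<ge> 2 * real k" and k: "real k \<ge> 1" and n: "real n = q + real k"
    using assms unfolding q_def by (simp_all add: of_nat_diff)
  have "real (n - (k - 1)) * real (n choose (k - 1)) = real n * B"
    unfolding B_def using binomial_absorb_comp[of n "k - 1"] by (metis of_nat_mult)
  moreover have "real (n - (k - 1)) = q + 1"
    using assms unfolding q_def by (simp add: of_nat_diff)
  ultimately have "(1 - 2 / (real n / real k)) * real (n choose (k - 1))
                     = (1 - (real k + 1) / (q + 1)) * B"
    using q k n by (simp add: field_simps)
  also have "\<dots> \<le> (1 - 2 * real k * real k / (q * q)) * B"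
  proof -
    have "(real k + 1) * (q * q) \<ge> (real k + 1) * (2 * real k * q)"
      using q k by (intro mult_left_mono) (auto intro: mult_right_mono)
    moreover have "2 * real k * q \<ge> 2 * real k * real k"
      using q k by auto
    ultimately have "2 * real k * real k * (q + 1) \<le> (real k + 1) * (q * q)"
      by (simp add: algebra_simps)
    then have "2 * real k * real k / (q * q) \<le> (real k + 1) / (q + 1)"
      using q k by (simp add: field_simps)
    then show ?thesis
      unfolding B_def by (intro mult_right_mono) auto
  qed
  also have "2 * real k * real k / (q * q) = 2 / (real n / real k - 1)^2"
    using n k by (simp add: field_simps power2_eq_square)
  finally show ?thesis unfolding B_def .
qed

theorem mainTheorem7:
  fixes n k :: nat and F :: "nat set set"
  assumes "k \<ge> 1" and "n \<ge> 1" and "n \<ge> 3 * k"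
    and "F \<subseteq> {A. A \<subseteq> {1..n} \<and> card A = k}"
    and "intersecting F"
    and "card (diff_family F) > (\<Sum>l<k. (n - 1) choose l)"
  shows "real (card (diff_family_level (k - 1) F))
           > (1 - 2 / (real n / real k - 1)^2) * real ((n - 1) choose (k - 1))
       \<and> real (card (diff_family_level (k - 1) F))
           \<ge> (1 - 2 / (real n / real k)) * real (n choose (k - 1))"
proof -
  define L where "L = card (diff_family_level (k - 1) F)"
  define B where "B = (n - 1) choose (k - 1)"
  define S where "S = (\<Sum>l<k - 2. (n - 1) choose l)"
  have "card (diff_family F) \<le> L + (\<Sum>l<k - 1. n choose l)"
    using card_le_card_level_plus_binomials[of "{1..n}" "diff_family F" "k - 1"]
      diff_family_of_intersecting[OF assms(4) _ assms(5)]
    unfolding L_def diff_family_level_def by simp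
  moreover have "(\<Sum>l<k - 1. n choose l) = (\<Sum>l<k - 1. (n - 1) choose l) + S"
    using sum_choose_Suc_lessThan[where j = "k - 1" and m = "n - 1"] assms(2)
    unfolding S_def by (simp add: numeral_2_eq_2)
  moreover have "(\<Sum>l<k. (n - 1) choose l) = (\<Sum>l<k - 1. (n - 1) choose l) + B"
    using assms(1) unfolding B_def by (cases k) simp_all
  ultimately have "real L > real B - real S"
    using assms(6) by linarith
  moreover have "real S \<le> 2 / (real n / real k - 1)^2 * real B"
    using sum_binomial_below_le[of "k - 1" k n] assms(1,3)
    unfolding S_def B_def by (simp add: of_nat_diff field_simps numeral_2_eq_2)
  ultimately have "real L > (1 - 2 / (real n / real k - 1)^2) * real B"
    by (simp add: algebra_simps)
  then show ?thesis
    using binomial_bound_comparison[OF assms(1,3)] unfolding L_def B_def by simp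
qed

end
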